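(* Let $R$ be a commutative local ring and $s\in R$. Then $A\in M_2(R;s)$ is strongly $J$-clean if and only if one of the following holds: (1) $A\in J\big(M_2(R;s)\big)$; (2) $I_2-A\in J\big(M_2(R;s)\big)$; (3) the $s$-characteristic polynomial $t^2-tr(A)t+\det_s(A)$ has a root in $J(R)$ and a root in $1+J(R)$.
   Context: A commutative ring $R$ is local if it has a unique maximal ideal $J(R)$ (its Jacobson radical); $J(T)$ denotes the Jacobson radical of a ring $T$. For a commutative ring $R$ and $s\in R$, $M_2(R;s)$ denotes the ring whose elements are the $2\times 2$ arrays $\left[\begin{smallmatrix} a&b\\ c&d\end{smallmatrix}\right]$ with $a,b,c,d\in R$, with componentwise addition and multiplication $\left[\begin{smallmatrix} a&b\\ c&d\end{smallmatrix}\right]\left[\begin{smallmatrix} a'&b'\\ c'&d'\end{smallmatrix}\right]=\left[\begin{smallmatrix} aa'+s^2bc'&ab'+bd'\\ ca'+dc'&s^2cb'+dd'\end{smallmatrix}\right]$, with identity $I_2$. For $A=\left[\begin{smallmatrix} a&b\\ c&d\end{smallmatrix}\right]$, $\det_s(A)=ad-s^2bc$ and $tr(A)=a+d$. An element $a$ of a ring $T$ is strongly $J$-clean if there is an idempotent $e\in T$ with $ae=ea$ and $a-e\in J(T)$. *)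

theory Defs
  imports "HOL-Algebra.Algebra"
begin

definition left_ideal :: "'a set \<Rightarrow> ('a, 'b) ring_scheme \<Rightarrow> bool" where
  "left_ideal I T \<longleftrightarrow> additive_subgroup I T \<and>
     (\<forall>x\<in>carrier T. \<forall>a\<in>I. x \<otimes>\<^bsub>T\<^esub> a \<in> I)"

definition maximal_left_ideal :: "'a set \<Rightarrow> ('a, 'b) ring_scheme \<Rightarrow> bool" where
  "maximal_left_ideal I T \<longleftrightarrow> left_ideal I T \<and> I \<noteq> carrier T \<and>
     (\<forall>K. left_ideal K T \<and> I \<subseteq> K \<longrightarrow> K = I \<or> K = carrier T)"

definition jacobson :: "('a, 'b) ring_scheme \<Rightarrow> 'a set" where
  "jacobson T = carrier T \<inter> \<Inter> {I. maximal_left_ideal I T}"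

definition local_ring :: "('a, 'b) ring_scheme \<Rightarrow> bool" where
  "local_ring R \<longleftrightarrow> cring R \<and> (\<exists>!I. maximalideal I R)"

definition strongly_J_clean :: "('a, 'b) ring_scheme \<Rightarrow> 'a \<Rightarrow> bool" where
  "strongly_J_clean T a \<longleftrightarrow> a \<in> carrier T \<and>
     (\<exists>e\<in>carrier T. e \<otimes>\<^bsub>T\<^esub> e = e \<and> a \<otimes>\<^bsub>T\<^esub> e = e \<otimes>\<^bsub>T\<^esub> a \<and>
        a \<ominus>\<^bsub>T\<^esub> e \<in> jacobson T)"

text \<open>The ring M_2(R;s); an array [a b; c d] is the tuple (a,b,c,d).\<close>
definition M2s :: "('a, 'b) ring_scheme \<Rightarrow> 'a \<Rightarrow> ('a \<times> 'a \<times> 'a \<times> 'a) ring" where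
  "M2s R s = \<lparr>carrier = {(a,b,c,d). a \<in> carrier R \<and> b \<in> carrier R \<and> c \<in> carrier R \<and> d \<in> carrier R},
     monoid.mult = (\<lambda>(a,b,c,d) (a',b',c',d').
        (a \<otimes>\<^bsub>R\<^esub> a' \<oplus>\<^bsub>R\<^esub> (s \<otimes>\<^bsub>R\<^esub> s) \<otimes>\<^bsub>R\<^esub> b \<otimes>\<^bsub>R\<^esub> c',
         a \<otimes>\<^bsub>R\<^esub> b' \<oplus>\<^bsub>R\<^esub> b \<otimes>\<^bsub>R\<^esub> d',
         c \<otimes>\<^bsub>R\<^esub> a' \<oplus>\<^bsub>R\<^esub> d \<otimes>\<^bsub>R\<^esub> c',
         (s \<otimes>\<^bsub>R\<^esub> s) \<otimes>\<^bsub>R\<^esub> c \<otimes>\<^bsub>R\<^esub> b' \<oplus>\<^bsub>R\<^esub> d \<otimes>\<^bsub>R\<^esub> d')),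
     one = (\<one>\<^bsub>R\<^esub>, \<zero>\<^bsub>R\<^esub>, \<zero>\<^bsub>R\<^esub>, \<one>\<^bsub>R\<^esub>),
     ring.zero = (\<zero>\<^bsub>R\<^esub>, \<zero>\<^bsub>R\<^esub>, \<zero>\<^bsub>R\<^esub>, \<zero>\<^bsub>R\<^esub>),
     ring.add = (\<lambda>(a,b,c,d) (a',b',c',d').
        (a \<oplus>\<^bsub>R\<^esub> a', b \<oplus>\<^bsub>R\<^esub> b', c \<oplus>\<^bsub>R\<^esub> c', d \<oplus>\<^bsub>R\<^esub> d'))\<rparr>"

definition det_s :: "('a, 'b) ring_scheme \<Rightarrow> 'a \<Rightarrow> 'a \<times> 'a \<times> 'a \<times> 'a \<Rightarrow> 'a" where
  "det_s R s A = (case A of (a,b,c,d) \<Rightarrow>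
      a \<otimes>\<^bsub>R\<^esub> d \<ominus>\<^bsub>R\<^esub> (s \<otimes>\<^bsub>R\<^esub> s) \<otimes>\<^bsub>R\<^esub> b \<otimes>\<^bsub>R\<^esub> c)"

definition tr2 :: "('a, 'b) ring_scheme \<Rightarrow> 'a \<times> 'a \<times> 'a \<times> 'a \<Rightarrow> 'a" where
  "tr2 R A = (case A of (a,b,c,d) \<Rightarrow> a \<oplus>\<^bsub>R\<^esub> d)"

definition char_s :: "('a, 'b) ring_scheme \<Rightarrow> 'a \<Rightarrow> 'a \<times> 'a \<times> 'a \<times> 'a \<Rightarrow> 'a \<Rightarrow> 'a" where
  "char_s R s A t = t \<otimes>\<^bsub>R\<^esub> t \<ominus>\<^bsub>R\<^esub> tr2 R A \<otimes>\<^bsub>R\<^esub> t \<oplus>\<^bsub>R\<^esub> det_s R s A"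

end

theory Submission
  imports Defs
begin

text \<open>
  Write A = E + W with E an idempotent commuting with A and W in the radical. If E is 0 or 1
  we are in case (1) or (2). Otherwise det_s E and tr E are idempotents of the local ring R
  (by multiplicativity of det_s and by Cayley-Hamilton), hence 0 or 1, and E \<noteq> 0, 1 forces
  det_s E = 0 and tr E = 1.
  For such an E one has E X E = tr(E X) E, so E A = \<beta> E and (1 - E) A = \<alpha> (1 - E); hence
  A = \<alpha> I + (\<beta> - \<alpha>) E has s-characteristic polynomial (t - \<alpha>)(t - \<beta>), and \<alpha>, \<beta> - 1 lie in
  J(R) because \<alpha> (1 - E) and (\<beta> - 1) E lie in the radical of M2(R;s).

  Conversely, for roots \<alpha> \<in> J(R) and \<beta> \<in> 1 + J(R) the difference \<beta> - \<alpha> is a unit, and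
  Cayley-Hamilton gives (A - \<alpha> I)^2 = (\<beta> - \<alpha>)(A - \<alpha> I). So E = (A - \<alpha> I)/(\<beta> - \<alpha>) is an
  idempotent commuting with A, and A - E has all entries in J(R); such a matrix W lies in the
  radical since det_s (I - Y W) is a unit for every Y.
\<close>

section \<open>The Jacobson radical as an intersection of maximal left ideals\<close>

context ring
begin

lemma left_idealI:
  assumes "K \<subseteq> carrier R" "\<zero> \<in> K" "\<And>x y. x \<in> K \<Longrightarrow> y \<in> K \<Longrightarrow> x \<oplus> y \<in> K"
    and "\<And>x a. x \<in> carrier R \<Longrightarrow> a \<in> K \<Longrightarrow> x \<otimes> a \<in> K"
  shows "left_ideal K R"
proof -
  have "\<ominus> a \<in> K" if "a \<in> K" for a
  proof -
    have "\<ominus> a = (\<ominus> \<one>) \<otimes> a" using that assms(1) by (auto simp: l_minus)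
    then show ?thesis using assms(4) that by simp
  qed
  then have "subgroup K (add_monoid R)"
    by (intro subgroup.intro) (use assms in \<open>auto simp: a_inv_def[symmetric]\<close>)
  then show ?thesis unfolding left_ideal_def using assms(4) by (auto intro: additive_subgroupI)
qed

lemma left_ideal_subset: "left_ideal K R \<Longrightarrow> K \<subseteq> carrier R"
  unfolding left_ideal_def by (simp add: additive_subgroup.a_subset)

lemma left_ideal_zero: "left_ideal K R \<Longrightarrow> \<zero> \<in> K"
  unfolding left_ideal_def by (simp add: additive_subgroup.zero_closed)

lemma left_ideal_add: "left_ideal K R \<Longrightarrow> x \<in> K \<Longrightarrow> y \<in> K \<Longrightarrow> x \<oplus> y \<in> K"
  unfolding left_ideal_def by (simp add: additive_subgroup.a_closed)

lemma left_ideal_l_mult: "left_ideal K R \<Longrightarrow> x \<in> carrier R \<Longrightarrow> a \<in> K \<Longrightarrow> x \<otimes> a \<in> K"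
  unfolding left_ideal_def by blast

lemma left_ideal_one_imp_carrier:
  assumes "left_ideal K R" "\<one> \<in> K"
  shows "K = carrier R"
proof
  show "K \<subseteq> carrier R" using assms(1) by (rule left_ideal_subset)
  show "carrier R \<subseteq> K"
    using left_ideal_l_mult[OF assms(1) _ assms(2)] by (metis r_one subsetI)
qed

lemma left_ideal_left_multiples:
  assumes x: "x \<in> carrier R"
  shows "left_ideal {y \<otimes> x | y. y \<in> carrier R} R"
proof (rule left_idealI)
  show "{y \<otimes> x | y. y \<in> carrier R} \<subseteq> carrier R" using x by auto
  show "\<zero> \<in> {y \<otimes> x | y. y \<in> carrier R}" using x by (auto intro!: exI[of _ \<zero>])
  show "a \<oplus> b \<in> {y \<otimes> x | y. y \<in> carrier R}"
    if "a \<in> {y \<otimes> x | y. y \<in> carrier R}" "b \<in> {y \<otimes> x | y. y \<in> carrier R}" for a b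
  proof -
    from that obtain y z where "y \<in> carrier R" "z \<in> carrier R" "a = y \<otimes> x" "b = z \<otimes> x"
      by blast
    moreover from this have "a \<oplus> b = (y \<oplus> z) \<otimes> x" using x by (simp add: l_distr)
    ultimately show ?thesis by blast
  qed
  show "z \<otimes> a \<in> {y \<otimes> x | y. y \<in> carrier R}"
    if "z \<in> carrier R" "a \<in> {y \<otimes> x | y. y \<in> carrier R}" for z a
  proof -
    from that obtain y where "y \<in> carrier R" "a = y \<otimes> x" by blast
    moreover from this have "z \<otimes> a = (z \<otimes> y) \<otimes> x" using x \<open>z \<in> carrier R\<close> by (simp add: m_assoc)
    ultimately show ?thesis using \<open>z \<in> carrier R\<close> by blast
  qed
qed

lemma left_ideal_add_left_multiples:
  assumes M: "left_ideal M R" and x: "x \<in> carrier R"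
  shows "left_ideal {m \<oplus> y \<otimes> x | m y. m \<in> M \<and> y \<in> carrier R} R"
proof (rule left_idealI)
  have MC: "M \<subseteq> carrier R" using M by (rule left_ideal_subset)
  then show "{m \<oplus> y \<otimes> x | m y. m \<in> M \<and> y \<in> carrier R} \<subseteq> carrier R" using x by auto
  have "\<zero> = \<zero> \<oplus> \<zero> \<otimes> x" using x by simp
  then show "\<zero> \<in> {m \<oplus> y \<otimes> x | m y. m \<in> M \<and> y \<in> carrier R}" using left_ideal_zero[OF M] by blast
  show "a \<oplus> b \<in> {m \<oplus> y \<otimes> x | m y. m \<in> M \<and> y \<in> carrier R}"
    if "a \<in> {m \<oplus> y \<otimes> x | m y. m \<in> M \<and> y \<in> carrier R}"
      "b \<in> {m \<oplus> y \<otimes> x | m y. m \<in> M \<and> y \<in> carrier R}" for a b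
  proof -
    from that obtain m1 y1 m2 y2 where "m1 \<in> M" "y1 \<in> carrier R" "a = m1 \<oplus> y1 \<otimes> x"
      "m2 \<in> M" "y2 \<in> carrier R" "b = m2 \<oplus> y2 \<otimes> x" by blast
    moreover from this have "a \<oplus> b = (m1 \<oplus> m2) \<oplus> (y1 \<oplus> y2) \<otimes> x"
      using x subsetD[OF MC \<open>m1 \<in> M\<close>] subsetD[OF MC \<open>m2 \<in> M\<close>] by algebra
    ultimately show ?thesis using left_ideal_add[OF M] by blast
  qed
  show "z \<otimes> a \<in> {m \<oplus> y \<otimes> x | m y. m \<in> M \<and> y \<in> carrier R}"
    if "z \<in> carrier R" "a \<in> {m \<oplus> y \<otimes> x | m y. m \<in> M \<and> y \<in> carrier R}" for z a
  proof -
    from that obtain m y where "m \<in> M" "y \<in> carrier R" "a = m \<oplus> y \<otimes> x" by blast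
    moreover from this have "z \<otimes> a = z \<otimes> m \<oplus> (z \<otimes> y) \<otimes> x"
      using x \<open>z \<in> carrier R\<close> subsetD[OF MC \<open>m \<in> M\<close>] by algebra
    ultimately show ?thesis using left_ideal_l_mult[OF M] \<open>z \<in> carrier R\<close> by blast
  qed
qed

lemma left_ideal_Union_chain:
  assumes "C \<noteq> {}" "\<And>K. K \<in> C \<Longrightarrow> left_ideal K R"
    and chain: "\<And>V W. V \<in> C \<Longrightarrow> W \<in> C \<Longrightarrow> V \<subseteq> W \<or> W \<subseteq> V"
  shows "left_ideal (\<Union>C) R"
proof (rule left_idealI)
  show "\<Union>C \<subseteq> carrier R" using assms(2) left_ideal_subset by blast
  show "\<zero> \<in> \<Union>C" using assms(1,2) left_ideal_zero by blast
  show "x \<oplus> y \<in> \<Union>C" if "x \<in> \<Union>C" "y \<in> \<Union>C" for x y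
  proof -
    from that obtain V W where "x \<in> V" "V \<in> C" "y \<in> W" "W \<in> C" by blast
    moreover from this have "x \<oplus> y \<in> V \<or> x \<oplus> y \<in> W"
      using chain[of V W] assms(2) left_ideal_add by blast
    ultimately show ?thesis by blast
  qed
  show "x \<otimes> a \<in> \<Union>C" if "x \<in> carrier R" "a \<in> \<Union>C" for x a
    using that assms(2) left_ideal_l_mult by blast
qed

lemma exists_maximal_left_ideal:
  assumes "left_ideal I R" "\<one> \<notin> I"
  shows "\<exists>M. maximal_left_ideal M R \<and> I \<subseteq> M"
proof -
  let ?S = "{K. left_ideal K R \<and> I \<subseteq> K \<and> \<one> \<notin> K}"
  have "\<exists>W\<in>?S. \<forall>V\<in>C. V \<subseteq> W" if C: "C \<in> chains ?S" for C
  proof (cases "C = {}")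
    case True
    then show ?thesis using assms by auto
  next
    case False
    have "C \<subseteq> ?S" using C by (simp add: chains_def)
    moreover have "left_ideal (\<Union>C) R"
      by (rule left_ideal_Union_chain) (use False \<open>C \<subseteq> ?S\<close> C chainsD in blast)+
    ultimately show ?thesis using False by blast
  qed
  then obtain M where M: "M \<in> ?S" "\<forall>V\<in>?S. M \<subseteq> V \<longrightarrow> V = M"
    using Zorn_Lemma2[of ?S] by blast
  have "maximal_left_ideal M R"
    unfolding maximal_left_ideal_def using M left_ideal_one_imp_carrier by blast
  then show ?thesis using M by blast
qed

lemma jacobson_subset: "jacobson R \<subseteq> carrier R"
  unfolding jacobson_def by blast

lemma jacobson_add: "x \<in> jacobson R \<Longrightarrow> y \<in> jacobson R \<Longrightarrow> x \<oplus> y \<in> jacobson R"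
  unfolding jacobson_def maximal_left_ideal_def by (auto intro: left_ideal_add)

lemma jacobson_l_mult: "y \<in> carrier R \<Longrightarrow> x \<in> jacobson R \<Longrightarrow> y \<otimes> x \<in> jacobson R"
  unfolding jacobson_def maximal_left_ideal_def by (auto intro: left_ideal_l_mult)

lemma jacobson_a_inv: "x \<in> jacobson R \<Longrightarrow> \<ominus> x \<in> jacobson R"
  using jacobson_l_mult[of "\<ominus> \<one>" x] unfolding jacobson_def by (auto simp: l_minus)

lemma jacobson_one_minus_left_invertible:
  assumes x: "x \<in> jacobson R"
  shows "\<exists>u\<in>carrier R. u \<otimes> (\<one> \<ominus> x) = \<one>"
proof (rule ccontr)
  assume no_inv: "\<not> ?thesis"
  have xc: "x \<in> carrier R" using x jacobson_subset by blast
  let ?I = "{y \<otimes> (\<one> \<ominus> x) | y. y \<in> carrier R}"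
  have "left_ideal ?I R" by (rule left_ideal_left_multiples) (use xc in simp)
  moreover have "\<one> \<notin> ?I" using no_inv by auto
  ultimately obtain M where M: "maximal_left_ideal M R" "?I \<subseteq> M"
    using exists_maximal_left_ideal by blast
  have "x \<in> M" using x M(1) unfolding jacobson_def by blast
  moreover have "\<one> \<ominus> x \<in> M"
  proof -
    have "\<one> \<ominus> x = \<one> \<otimes> (\<one> \<ominus> x)" using xc by simp
    then show ?thesis using M(2) by blast
  qed
  ultimately have "x \<oplus> (\<one> \<ominus> x) \<in> M"
    using M(1) left_ideal_add unfolding maximal_left_ideal_def by blast
  moreover have "x \<oplus> (\<one> \<ominus> x) = \<one>" using xc by algebra
  ultimately have "\<one> \<in> M" by simp
  then show False
    using M(1) left_ideal_one_imp_carrier unfolding maximal_left_ideal_def by blast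
qed

lemma idem_in_jacobson_eq_zero:
  assumes e: "e \<in> carrier R" "e \<otimes> e = e" "e \<in> jacobson R"
  shows "e = \<zero>"
proof -
  obtain u where u: "u \<in> carrier R" "u \<otimes> (\<one> \<ominus> e) = \<one>"
    using jacobson_one_minus_left_invertible e(3) by blast
  have "e = u \<otimes> (\<one> \<ominus> e) \<otimes> e" using u e(1) by simp
  also have "\<dots> = u \<otimes> (e \<ominus> e \<otimes> e)" using u(1) e(1) by algebra
  finally show ?thesis using u(1) e by (simp add: r_neg minus_eq)
qed

lemma jacobsonI:
  assumes x: "x \<in> carrier R"
    and inv: "\<And>y. y \<in> carrier R \<Longrightarrow> \<exists>u\<in>carrier R. u \<otimes> (\<one> \<ominus> y \<otimes> x) = \<one>"
  shows "x \<in> jacobson R"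
  unfolding jacobson_def
proof (intro IntI InterI)
  show "x \<in> carrier R" by fact
  fix M assume "M \<in> {I. maximal_left_ideal I R}"
  then have M: "left_ideal M R" "M \<noteq> carrier R"
    and M_max: "\<And>K. left_ideal K R \<Longrightarrow> M \<subseteq> K \<Longrightarrow> K = M \<or> K = carrier R"
    unfolding maximal_left_ideal_def by auto
  have MC: "M \<subseteq> carrier R" using M(1) by (rule left_ideal_subset)
  show "x \<in> M"
  proof (rule ccontr)
    assume "x \<notin> M"
    let ?K = "{m \<oplus> y \<otimes> x | m y. m \<in> M \<and> y \<in> carrier R}"
    have "M \<subseteq> ?K"
    proof
      fix m assume "m \<in> M"
      moreover from this have "m = m \<oplus> \<zero> \<otimes> x" using MC x by auto
      ultimately show "m \<in> ?K" by blast
    qed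
    moreover have "x \<in> ?K"
    proof -
      have "x = \<zero> \<oplus> \<one> \<otimes> x" using x by simp
      then show ?thesis using left_ideal_zero[OF M(1)] by blast
    qed
    ultimately have "?K = carrier R"
      using M_max[OF left_ideal_add_left_multiples[OF M(1) x]] \<open>x \<notin> M\<close> by blast
    then have "\<one> \<in> ?K" by simp
    then obtain m y where my: "m \<in> M" "y \<in> carrier R" "\<one> = m \<oplus> y \<otimes> x" by blast
    then have "m = \<one> \<ominus> y \<otimes> x" using x subsetD[OF MC \<open>m \<in> M\<close>] by algebra
    moreover obtain u where "u \<in> carrier R" "u \<otimes> (\<one> \<ominus> y \<otimes> x) = \<one>" using inv my(2) by blast
    ultimately have "\<one> \<in> M" using left_ideal_l_mult[OF M(1)] my(1) by metis
    then show False using left_ideal_one_imp_carrier M by blast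
  qed
qed

lemma idem_commute_mult_eq_sandwich:
  assumes "e \<in> carrier R" "a \<in> carrier R" "e \<otimes> e = e" "a \<otimes> e = e \<otimes> a"
  shows "e \<otimes> a = e \<otimes> a \<otimes> e"
  using assms by (metis m_assoc)

lemma one_minus_idem:
  assumes "e \<in> carrier R" "a \<in> carrier R" "e \<otimes> e = e" "a \<otimes> e = e \<otimes> a"
  shows "(\<one> \<ominus> e) \<otimes> (\<one> \<ominus> e) = \<one> \<ominus> e" "a \<otimes> (\<one> \<ominus> e) = (\<one> \<ominus> e) \<otimes> a"
    and "(\<one> \<ominus> e) \<otimes> e = \<zero>"
proof -
  have "(\<one> \<ominus> e) \<otimes> e = e \<ominus> e \<otimes> e" using assms(1) by (simp add: minus_eq l_distr l_minus)
  then show ce: "(\<one> \<ominus> e) \<otimes> e = \<zero>" using assms(1,3) by (simp add: minus_eq r_neg)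
  have "(\<one> \<ominus> e) \<otimes> (\<one> \<ominus> e) = (\<one> \<ominus> e) \<ominus> (\<one> \<ominus> e) \<otimes> e"
    using assms(1) by (simp add: minus_eq r_distr r_minus)
  then show "(\<one> \<ominus> e) \<otimes> (\<one> \<ominus> e) = \<one> \<ominus> e" using assms(1) ce by (simp add: minus_eq)
  have "a \<otimes> (\<one> \<ominus> e) = a \<ominus> a \<otimes> e" using assms(1,2) by (simp add: minus_eq r_distr r_minus)
  also have "\<dots> = (\<one> \<ominus> e) \<otimes> a" using assms by (simp add: minus_eq l_distr l_minus)
  finally show "a \<otimes> (\<one> \<ominus> e) = (\<one> \<ominus> e) \<otimes> a" .
qed

lemma strongly_J_clean_cases:
  assumes "strongly_J_clean R a"
  shows "a \<in> jacobson R \<or> \<one> \<ominus> a \<in> jacobson R \<or>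
    (\<exists>e\<in>carrier R. e \<otimes> e = e \<and> a \<otimes> e = e \<otimes> a \<and> a \<ominus> e \<in> jacobson R \<and> e \<noteq> \<zero> \<and> e \<noteq> \<one>)"
proof -
  obtain e where e: "e \<in> carrier R" "e \<otimes> e = e" "a \<otimes> e = e \<otimes> a" "a \<ominus> e \<in> jacobson R"
    and a: "a \<in> carrier R"
    using assms unfolding strongly_J_clean_def by blast
  consider "e = \<zero>" | "e = \<one>" | "e \<noteq> \<zero>" "e \<noteq> \<one>" by blast
  then show ?thesis
  proof cases
    case 1
    then show ?thesis using e a by (simp add: minus_eq)
  next
    case 2
    have "\<one> \<ominus> a = \<ominus> (a \<ominus> \<one>)" using a by algebra
    then show ?thesis using e(4) 2 jacobson_a_inv by auto
  qed (use e in blast)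
qed

lemma strongly_J_clean_if_jacobson:
  assumes "a \<in> carrier R" "a \<in> jacobson R \<or> \<one> \<ominus> a \<in> jacobson R"
  shows "strongly_J_clean R a"
  using assms(2)
proof
  assume "a \<in> jacobson R"
  then show ?thesis
    unfolding strongly_J_clean_def using assms(1) by (auto simp: minus_eq intro!: bexI[of _ \<zero>])
next
  assume "\<one> \<ominus> a \<in> jacobson R"
  moreover have "a \<ominus> \<one> = \<ominus> (\<one> \<ominus> a)" using assms(1) by algebra
  ultimately show ?thesis
    unfolding strongly_J_clean_def using assms(1) jacobson_a_inv by (auto intro!: bexI[of _ \<one>])
qed

end

section \<open>Commutative local rings\<close>

context cring
begin

lemma jacobson_r_mult: "x \<in> jacobson R \<Longrightarrow> y \<in> carrier R \<Longrightarrow> x \<otimes> y \<in> jacobson R"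
  using jacobson_l_mult[of y x] m_comm[of x y] jacobson_subset by auto

lemma jacobson_minus: "x \<in> jacobson R \<Longrightarrow> y \<in> jacobson R \<Longrightarrow> x \<ominus> y \<in> jacobson R"
  by (simp add: minus_eq jacobson_add jacobson_a_inv)

lemma left_ideal_iff_ideal: "left_ideal K R \<longleftrightarrow> ideal K R"
proof
  assume L: "left_ideal K R"
  have l_closed: "x \<otimes> a \<in> K" if "a \<in> K" "x \<in> carrier R" for a x
    using L that(2,1) by (rule left_ideal_l_mult)
  have r_closed: "a \<otimes> x \<in> K" if "a \<in> K" "x \<in> carrier R" for a x
  proof -
    have "a \<in> carrier R" using that(1) left_ideal_subset[OF L] by blast
    then have "a \<otimes> x = x \<otimes> a" using that(2) by (rule m_comm)
    then show ?thesis using l_closed[OF that] by simp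
  qed
  have "additive_subgroup K R" using L unfolding left_ideal_def by (rule conjunct1)
  then show "ideal K R"
    using ring_axioms l_closed r_closed by (intro ideal.intro ideal_axioms.intro)
next
  assume I: "ideal K R"
  show "left_ideal K R"
    unfolding left_ideal_def using ideal.axioms(1)[OF I] ideal.I_l_closed[OF I] by blast
qed

lemma maximal_left_ideal_iff_maximalideal: "maximal_left_ideal K R \<longleftrightarrow> maximalideal K R"
proof
  assume M: "maximal_left_ideal K R"
  show "maximalideal K R"
  proof (rule maximalidealI)
    show "ideal K R" using M left_ideal_iff_ideal unfolding maximal_left_ideal_def by blast
    show "carrier R \<noteq> K" using M unfolding maximal_left_ideal_def by blast
    show "J = K \<or> J = carrier R" if "ideal J R" "K \<subseteq> J" "J \<subseteq> carrier R" for J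
      using that M left_ideal_iff_ideal unfolding maximal_left_ideal_def by blast
  qed
next
  assume M: "maximalideal K R"
  show "maximal_left_ideal K R"
    unfolding maximal_left_ideal_def left_ideal_iff_ideal
  proof (intro conjI allI impI)
    show "ideal K R" using M unfolding maximalideal_def by blast
    show "K \<noteq> carrier R" using maximalideal.I_notcarr[OF M] by blast
    show "J = K \<or> J = carrier R" if "ideal J R \<and> K \<subseteq> J" for J
      using that maximalideal.I_maximal[OF M] ideal.axioms(1) additive_subgroup.a_subset by blast
  qed
qed

end

locale local_cring = cring +
  assumes local_ring: "local_ring R"
begin

lemma maximal_left_ideal_eq_jacobson:
  assumes "maximal_left_ideal M R"
  shows "M = jacobson R"
proof -
  obtain I where "maximalideal I R" and I_unique: "\<And>K. maximalideal K R \<Longrightarrow> K = I"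
    using local_ring unfolding local_ring_def by blast
  then have "maximal_left_ideal K R \<longleftrightarrow> K = M" for K
    using assms unfolding maximal_left_ideal_iff_maximalideal by blast
  then have "{K. maximal_left_ideal K R} = {M}" by blast
  then show ?thesis
    using assms left_ideal_subset unfolding jacobson_def maximal_left_ideal_def by auto
qed

lemma maximalideal_jacobson: "maximalideal (jacobson R) R"
proof -
  obtain M where M: "maximalideal M R" using local_ring unfolding local_ring_def by blast
  then have "M = jacobson R"
    using maximal_left_ideal_eq_jacobson maximal_left_ideal_iff_maximalideal by blast
  then show ?thesis using M by simp
qed

lemma ideal_jacobson: "ideal (jacobson R) R"
  using maximalideal_jacobson unfolding maximalideal_def by blast

lemma one_notin_jacobson: "\<one> \<notin> jacobson R"
  using ideal.one_imp_carrier[OF ideal_jacobson] maximalideal.I_notcarr[OF maximalideal_jacobson]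
  by blast

lemma Units_if_notin_jacobson:
  assumes x: "x \<in> carrier R" "x \<notin> jacobson R"
  shows "x \<in> Units R"
proof (rule ccontr)
  assume not_unit: "x \<notin> Units R"
  have "\<one> \<notin> PIdl x"
  proof
    assume "\<one> \<in> PIdl x"
    then obtain y where y: "y \<in> carrier R" "\<one> = y \<otimes> x" unfolding cgenideal_def by blast
    then have "\<exists>y \<in> carrier R. y \<otimes> x = \<one> \<and> x \<otimes> y = \<one>"
      using m_comm x(1) by auto
    with x(1) have "x \<in> Units R" unfolding Units_def by fast
    with not_unit show False ..
  qed
  moreover have "left_ideal (PIdl x) R"
    using cgenideal_ideal[OF x(1)] by (simp add: left_ideal_iff_ideal)
  ultimately obtain M where "maximal_left_ideal M R" "PIdl x \<subseteq> M"
    using exists_maximal_left_ideal by blast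
  then have "x \<in> jacobson R"
    using cgenideal_self[OF x(1)] maximal_left_ideal_eq_jacobson by blast
  with x(2) show False ..
qed

lemma one_minus_jacobson_Units:
  assumes "p \<in> jacobson R"
  shows "\<one> \<ominus> p \<in> Units R"
proof (rule Units_if_notin_jacobson)
  have pc: "p \<in> carrier R" using assms jacobson_subset by blast
  then show "\<one> \<ominus> p \<in> carrier R" by simp
  show "\<one> \<ominus> p \<notin> jacobson R"
  proof
    assume "\<one> \<ominus> p \<in> jacobson R"
    then have "(\<one> \<ominus> p) \<oplus> p \<in> jacobson R" using assms jacobson_add by blast
    moreover have "(\<one> \<ominus> p) \<oplus> p = \<one>" using pc by algebra
    ultimately show False using one_notin_jacobson by simp
  qed
qed

lemma idem_eq_zero_or_one:
  assumes e: "e \<in> carrier R" "e \<otimes> e = e"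
  shows "e = \<zero> \<or> e = \<one>"
proof (cases "e \<in> jacobson R")
  case True
  then show ?thesis using idem_in_jacobson_eq_zero e by blast
next
  case False
  then have "e \<in> Units R" using Units_if_notin_jacobson e(1) by blast
  moreover have "e \<otimes> e = e \<otimes> \<one>" using e by simp
  ultimately have "e = \<one>" using Units_l_cancel[OF _ e(1) one_closed] by blast
  then show ?thesis ..
qed

end

section \<open>The ring M2(R;s)\<close>

lemma M2s_carrier [simp]:
  "(a,b,c,d) \<in> carrier (M2s R s) \<longleftrightarrow>
     a \<in> carrier R \<and> b \<in> carrier R \<and> c \<in> carrier R \<and> d \<in> carrier R"
  by (simp add: M2s_def)

lemma M2s_mult:
  "(a,b,c,d) \<otimes>\<^bsub>M2s R s\<^esub> (a',b',c',d') =
     (a \<otimes>\<^bsub>R\<^esub> a' \<oplus>\<^bsub>R\<^esub> (s \<otimes>\<^bsub>R\<^esub> s) \<otimes>\<^bsub>R\<^esub> b \<otimes>\<^bsub>R\<^esub> c',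
      a \<otimes>\<^bsub>R\<^esub> b' \<oplus>\<^bsub>R\<^esub> b \<otimes>\<^bsub>R\<^esub> d',
      c \<otimes>\<^bsub>R\<^esub> a' \<oplus>\<^bsub>R\<^esub> d \<otimes>\<^bsub>R\<^esub> c',
      (s \<otimes>\<^bsub>R\<^esub> s) \<otimes>\<^bsub>R\<^esub> c \<otimes>\<^bsub>R\<^esub> b' \<oplus>\<^bsub>R\<^esub> d \<otimes>\<^bsub>R\<^esub> d')"
  by (simp add: M2s_def)

lemma M2s_add:
  "(a,b,c,d) \<oplus>\<^bsub>M2s R s\<^esub> (a',b',c',d') =
     (a \<oplus>\<^bsub>R\<^esub> a', b \<oplus>\<^bsub>R\<^esub> b', c \<oplus>\<^bsub>R\<^esub> c', d \<oplus>\<^bsub>R\<^esub> d')"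
  by (simp add: M2s_def)

lemma M2s_one: "\<one>\<^bsub>M2s R s\<^esub> = (\<one>\<^bsub>R\<^esub>, \<zero>\<^bsub>R\<^esub>, \<zero>\<^bsub>R\<^esub>, \<one>\<^bsub>R\<^esub>)"
  by (simp add: M2s_def)

lemma M2s_zero: "\<zero>\<^bsub>M2s R s\<^esub> = (\<zero>\<^bsub>R\<^esub>, \<zero>\<^bsub>R\<^esub>, \<zero>\<^bsub>R\<^esub>, \<zero>\<^bsub>R\<^esub>)"
  by (simp add: M2s_def)

definition M2s_smult :: "('a, 'b) ring_scheme \<Rightarrow> 'a \<Rightarrow> 'a \<times> 'a \<times> 'a \<times> 'a \<Rightarrow> 'a \<times> 'a \<times> 'a \<times> 'a"
  where "M2s_smult R x A = (case A of (a,b,c,d) \<Rightarrow>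
    (x \<otimes>\<^bsub>R\<^esub> a, x \<otimes>\<^bsub>R\<^esub> b, x \<otimes>\<^bsub>R\<^esub> c, x \<otimes>\<^bsub>R\<^esub> d))"

lemma M2s_smult [simp]:
  "M2s_smult R x (a,b,c,d) = (x \<otimes>\<^bsub>R\<^esub> a, x \<otimes>\<^bsub>R\<^esub> b, x \<otimes>\<^bsub>R\<^esub> c, x \<otimes>\<^bsub>R\<^esub> d)"
  by (simp add: M2s_smult_def)

lemma M2s_carrierE:
  assumes "A \<in> carrier (M2s R s)"
  obtains a b c d where "A = (a,b,c,d)"
    "a \<in> carrier R" "b \<in> carrier R" "c \<in> carrier R" "d \<in> carrier R"
  using assms by (cases A) simp

locale M2s_cring = cring +
  fixes s
  assumes s_carrier: "s \<in> carrier R"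
begin

lemma abelian_group_M2s: "abelian_group (M2s R s)"
proof (rule abelian_groupI, goal_cases)
  case (1 x y) then show ?case by (cases x; cases y) (simp add: M2s_add)
next
  case 2 show ?case by (simp add: M2s_zero)
next
  case (3 x y z) then show ?case by (cases x; cases y; cases z) (simp add: M2s_add a_assoc)
next
  case (4 x y) then show ?case by (cases x; cases y) (simp add: M2s_add a_comm)
next
  case (5 x) then show ?case by (cases x) (simp add: M2s_add M2s_zero)
next
  case (6 x)
  obtain a b c d where "x = (a,b,c,d)" by (cases x)
  with 6 show ?case
    by (intro bexI[of _ "(\<ominus>a,\<ominus>b,\<ominus>c,\<ominus>d)"]) (simp_all add: M2s_add M2s_zero l_neg)
qed

lemma monoid_M2s: "monoid (M2s R s)"
proof (rule monoidI, goal_cases)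
  case (1 x y) then show ?case by (cases x; cases y) (simp add: M2s_mult s_carrier)
next
  case 2 show ?case by (simp add: M2s_one)
next
  case (3 x y z)
  obtain a b c d where x: "x = (a,b,c,d)" "a \<in> carrier R" "b \<in> carrier R" "c \<in> carrier R" "d \<in> carrier R"
    using 3(1) by (rule M2s_carrierE)
  obtain a' b' c' d' where y: "y = (a',b',c',d')"
    "a' \<in> carrier R" "b' \<in> carrier R" "c' \<in> carrier R" "d' \<in> carrier R"
    using 3(2) by (rule M2s_carrierE)
  obtain a'' b'' c'' d'' where z: "z = (a'',b'',c'',d'')"
    "a'' \<in> carrier R" "b'' \<in> carrier R" "c'' \<in> carrier R" "d'' \<in> carrier R"
    using 3(3) by (rule M2s_carrierE)
  show ?case using x(2-5) y(2-5) z(2-5) s_carrier unfolding x(1) y(1) z(1) M2s_mult by algebra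
next
  case (4 x) then show ?case by (cases x) (simp add: M2s_mult M2s_one s_carrier)
next
  case (5 x) then show ?case by (cases x) (simp add: M2s_mult M2s_one s_carrier)
qed

lemma ring_M2s: "ring (M2s R s)"
proof (rule ringI[OF abelian_group_M2s monoid_M2s])
  fix x y z
  assume "x \<in> carrier (M2s R s)" "y \<in> carrier (M2s R s)" "z \<in> carrier (M2s R s)"
  moreover obtain a b c d where x: "x = (a,b,c,d)" by (cases x)
  moreover obtain a' b' c' d' where y: "y = (a',b',c',d')" by (cases y)
  moreover obtain a'' b'' c'' d'' where z: "z = (a'',b'',c'',d'')" by (cases z)
  ultimately have "a \<in> carrier R" "b \<in> carrier R" "c \<in> carrier R" "d \<in> carrier R"
      "a' \<in> carrier R" "b' \<in> carrier R" "c' \<in> carrier R" "d' \<in> carrier R"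
      "a'' \<in> carrier R" "b'' \<in> carrier R" "c'' \<in> carrier R" "d'' \<in> carrier R"
    by simp_all
  then show "(x \<oplus>\<^bsub>M2s R s\<^esub> y) \<otimes>\<^bsub>M2s R s\<^esub> z = x \<otimes>\<^bsub>M2s R s\<^esub> z \<oplus>\<^bsub>M2s R s\<^esub> y \<otimes>\<^bsub>M2s R s\<^esub> z"
    and "z \<otimes>\<^bsub>M2s R s\<^esub> (x \<oplus>\<^bsub>M2s R s\<^esub> y) = z \<otimes>\<^bsub>M2s R s\<^esub> x \<oplus>\<^bsub>M2s R s\<^esub> z \<otimes>\<^bsub>M2s R s\<^esub> y"
    using s_carrier unfolding x y z M2s_mult M2s_add by algebra+
qed

sublocale M: ring "M2s R s"
  by (rule ring_M2s)

lemma M2s_minus: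
  assumes "(a,b,c,d) \<in> carrier (M2s R s)" "(a',b',c',d') \<in> carrier (M2s R s)"
  shows "(a,b,c,d) \<ominus>\<^bsub>M2s R s\<^esub> (a',b',c',d') = (a \<ominus> a', b \<ominus> b', c \<ominus> c', d \<ominus> d')"
proof -
  have "\<ominus>\<^bsub>M2s R s\<^esub> (a',b',c',d') = (\<ominus> a', \<ominus> b', \<ominus> c', \<ominus> d')"
    using assms(2) by (intro M.minus_equality) (simp_all add: M2s_add M2s_zero l_neg)
  then show ?thesis using assms by (simp add: M.minus_eq M2s_add minus_eq)
qed

lemma tr2_carrier: "A \<in> carrier (M2s R s) \<Longrightarrow> tr2 R A \<in> carrier R"
  by (erule M2s_carrierE) (simp add: tr2_def)

lemma det_s_carrier: "A \<in> carrier (M2s R s) \<Longrightarrow> det_s R s A \<in> carrier R"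
  by (erule M2s_carrierE) (simp add: det_s_def s_carrier)

lemma M2s_smult_carrier:
  "x \<in> carrier R \<Longrightarrow> A \<in> carrier (M2s R s) \<Longrightarrow> M2s_smult R x A \<in> carrier (M2s R s)"
  by (erule M2s_carrierE) simp

lemma M2s_smult_smult:
  assumes "x \<in> carrier R" "y \<in> carrier R" "A \<in> carrier (M2s R s)"
  shows "M2s_smult R x (M2s_smult R y A) = M2s_smult R (x \<otimes> y) A"
  using assms(3) by (rule M2s_carrierE) (use assms(1,2) in \<open>simp add: m_assoc\<close>)

lemma M2s_smult_mult:
  assumes "x \<in> carrier R" "y \<in> carrier R" "A \<in> carrier (M2s R s)" "B \<in> carrier (M2s R s)"
  shows "M2s_smult R x A \<otimes>\<^bsub>M2s R s\<^esub> M2s_smult R y B = M2s_smult R (x \<otimes> y) (A \<otimes>\<^bsub>M2s R s\<^esub> B)"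
proof -
  obtain a b c d where A: "A = (a,b,c,d)" "a \<in> carrier R" "b \<in> carrier R" "c \<in> carrier R" "d \<in> carrier R"
    using assms(3) by (rule M2s_carrierE)
  obtain a' b' c' d' where B: "B = (a',b',c',d')"
    "a' \<in> carrier R" "b' \<in> carrier R" "c' \<in> carrier R" "d' \<in> carrier R"
    using assms(4) by (rule M2s_carrierE)
  show ?thesis using A(2-5) B(2-5) assms(1,2) s_carrier unfolding A(1) B(1) M2s_smult M2s_mult by algebra
qed

lemma M2s_smult_zero: "A \<in> carrier (M2s R s) \<Longrightarrow> M2s_smult R \<zero> A = \<zero>\<^bsub>M2s R s\<^esub>"
  by (erule M2s_carrierE) (simp add: M2s_zero)

lemma M2s_smult_one: "A \<in> carrier (M2s R s) \<Longrightarrow> M2s_smult R \<one> A = A"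
  by (erule M2s_carrierE) simp

lemma M2s_smult_minus:
  assumes "x \<in> carrier R" "y \<in> carrier R" "A \<in> carrier (M2s R s)"
  shows "M2s_smult R x A \<ominus>\<^bsub>M2s R s\<^esub> M2s_smult R y A = M2s_smult R (x \<ominus> y) A"
proof -
  obtain a b c d where A: "A = (a,b,c,d)" "a \<in> carrier R" "b \<in> carrier R" "c \<in> carrier R" "d \<in> carrier R"
    using assms(3) by (rule M2s_carrierE)
  have "M2s_smult R x A \<ominus>\<^bsub>M2s R s\<^esub> M2s_smult R y A = (x \<otimes> a \<ominus> y \<otimes> a, x \<otimes> b \<ominus> y \<otimes> b,
      x \<otimes> c \<ominus> y \<otimes> c, x \<otimes> d \<ominus> y \<otimes> d)"
    using A assms(1,2) by (simp add: M2s_minus)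
  also have "\<dots> = M2s_smult R (x \<ominus> y) A"
    using A(2-5) assms(1,2) unfolding A(1) M2s_smult by algebra
  finally show ?thesis .
qed

lemma M2s_smult_jacobson_cancel:
  assumes x: "x \<in> Units R" and A: "A \<in> carrier (M2s R s)"
    and J: "M2s_smult R x A \<in> jacobson (M2s R s)"
  shows "A \<in> jacobson (M2s R s)"
proof -
  have xc: "x \<in> carrier R" "inv x \<in> carrier R" using x by auto
  obtain a b c d where A': "A = (a,b,c,d)" "a \<in> carrier R" "b \<in> carrier R" "c \<in> carrier R" "d \<in> carrier R"
    using A by (rule M2s_carrierE)
  have "A = (inv x, \<zero>, \<zero>, inv x) \<otimes>\<^bsub>M2s R s\<^esub> M2s_smult R x A"
    using A' x xc s_carrier by (simp add: M2s_mult m_assoc[symmetric])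
  also have "\<dots> \<in> jacobson (M2s R s)"
    using xc by (intro M.jacobson_l_mult J) simp
  finally show ?thesis .
qed

lemma det_s_mult:
  assumes "A \<in> carrier (M2s R s)" "B \<in> carrier (M2s R s)"
  shows "det_s R s (A \<otimes>\<^bsub>M2s R s\<^esub> B) = det_s R s A \<otimes> det_s R s B"
proof -
  obtain a b c d where A: "A = (a,b,c,d)" "a \<in> carrier R" "b \<in> carrier R" "c \<in> carrier R" "d \<in> carrier R"
    using assms(1) by (rule M2s_carrierE)
  obtain a' b' c' d' where B: "B = (a',b',c',d')"
    "a' \<in> carrier R" "b' \<in> carrier R" "c' \<in> carrier R" "d' \<in> carrier R"
    using assms(2) by (rule M2s_carrierE)
  define S where "S = s \<otimes> s"
  have "S \<in> carrier R" unfolding S_def using s_carrier by simp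
  then show ?thesis
    using A(2-5) B(2-5) unfolding A(1) B(1) det_s_def M2s_mult prod.case S_def[symmetric] by algebra
qed

lemma M2s_cayley_hamilton:
  assumes "A \<in> carrier (M2s R s)"
  shows "A \<otimes>\<^bsub>M2s R s\<^esub> A =
    M2s_smult R (tr2 R A) A \<ominus>\<^bsub>M2s R s\<^esub> M2s_smult R (det_s R s A) \<one>\<^bsub>M2s R s\<^esub>"
proof -
  obtain a b c d where A: "A = (a,b,c,d)" "a \<in> carrier R" "b \<in> carrier R" "c \<in> carrier R" "d \<in> carrier R"
    using assms by (rule M2s_carrierE)
  have "M2s_smult R (tr2 R A) A \<ominus>\<^bsub>M2s R s\<^esub> M2s_smult R (det_s R s A) \<one>\<^bsub>M2s R s\<^esub> =
      (tr2 R A \<otimes> a \<ominus> det_s R s A \<otimes> \<one>, tr2 R A \<otimes> b \<ominus> det_s R s A \<otimes> \<zero>,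
       tr2 R A \<otimes> c \<ominus> det_s R s A \<otimes> \<zero>, tr2 R A \<otimes> d \<ominus> det_s R s A \<otimes> \<one>)"
    using A s_carrier unfolding M2s_one by (simp add: M2s_minus tr2_def det_s_def)
  also have "\<dots> = A \<otimes>\<^bsub>M2s R s\<^esub> A"
    using A(2-5) s_carrier unfolding A(1) M2s_mult tr2_def det_s_def prod.case by algebra
  finally show ?thesis ..
qed

lemma M2s_square_if_det_s_zero:
  assumes A: "A \<in> carrier (M2s R s)" and det: "det_s R s A = \<zero>"
  shows "A \<otimes>\<^bsub>M2s R s\<^esub> A = M2s_smult R (tr2 R A) A"
proof -
  have "M2s_smult R (det_s R s A) \<one>\<^bsub>M2s R s\<^esub> = \<zero>\<^bsub>M2s R s\<^esub>"
    unfolding det M2s_one M2s_zero by simp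
  moreover have "M2s_smult R (tr2 R A) A \<in> carrier (M2s R s)"
    using A by (simp add: M2s_smult_carrier tr2_carrier)
  ultimately show ?thesis
    using M2s_cayley_hamilton[OF A] by (simp add: M.minus_eq)
qed

lemma M2s_sandwich_if_det_s_zero:
  assumes E: "E \<in> carrier (M2s R s)" and B: "B \<in> carrier (M2s R s)"
    and det: "det_s R s E = \<zero>"
  shows "E \<otimes>\<^bsub>M2s R s\<^esub> B \<otimes>\<^bsub>M2s R s\<^esub> E = M2s_smult R (tr2 R (E \<otimes>\<^bsub>M2s R s\<^esub> B)) E"
proof -
  obtain e1 e2 e3 e4 where E': "E = (e1,e2,e3,e4)"
    "e1 \<in> carrier R" "e2 \<in> carrier R" "e3 \<in> carrier R" "e4 \<in> carrier R"
    using E by (rule M2s_carrierE)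
  obtain x1 x2 x3 x4 where B': "B = (x1,x2,x3,x4)"
    "x1 \<in> carrier R" "x2 \<in> carrier R" "x3 \<in> carrier R" "x4 \<in> carrier R"
    using B by (rule M2s_carrierE)
  define \<tau> where "\<tau> = tr2 R (E \<otimes>\<^bsub>M2s R s\<^esub> B)"
  have \<tau>_c: "\<tau> \<in> carrier R" unfolding \<tau>_def using E B by (simp add: tr2_carrier)
  \<comment> \<open>the general identity is  E B E = tr(E B) E - det(E) adj(B)\<close>
  have "E \<otimes>\<^bsub>M2s R s\<^esub> B \<otimes>\<^bsub>M2s R s\<^esub> E =
      (\<tau> \<otimes> e1 \<ominus> det_s R s E \<otimes> x4, \<tau> \<otimes> e2 \<oplus> det_s R s E \<otimes> x2,
       \<tau> \<otimes> e3 \<oplus> det_s R s E \<otimes> x3, \<tau> \<otimes> e4 \<ominus> det_s R s E \<otimes> x1)"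
    using E'(2-5) B'(2-5) s_carrier unfolding \<tau>_def E'(1) B'(1) tr2_def det_s_def M2s_mult prod.case
    by algebra
  also have "\<dots> = (\<tau> \<otimes> e1 \<ominus> \<zero> \<otimes> x4, \<tau> \<otimes> e2 \<oplus> \<zero> \<otimes> x2,
       \<tau> \<otimes> e3 \<oplus> \<zero> \<otimes> x3, \<tau> \<otimes> e4 \<ominus> \<zero> \<otimes> x1)"
    by (simp only: det)
  also have "\<dots> = M2s_smult R \<tau> E"
    using E'(2-5) B'(2-5) \<tau>_c by (simp add: E'(1) minus_eq)
  finally show ?thesis unfolding \<tau>_def .
qed

lemma det_s_one_minus:
  assumes "A \<in> carrier (M2s R s)"
  shows "det_s R s (\<one>\<^bsub>M2s R s\<^esub> \<ominus>\<^bsub>M2s R s\<^esub> A) = \<one> \<ominus> tr2 R A \<oplus> det_s R s A"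
proof -
  obtain a b c d where A: "A = (a,b,c,d)" "a \<in> carrier R" "b \<in> carrier R" "c \<in> carrier R" "d \<in> carrier R"
    using assms by (rule M2s_carrierE)
  have "det_s R s (\<one>\<^bsub>M2s R s\<^esub> \<ominus>\<^bsub>M2s R s\<^esub> A) =
      (\<one> \<ominus> a) \<otimes> (\<one> \<ominus> d) \<ominus> s \<otimes> s \<otimes> (\<zero> \<ominus> b) \<otimes> (\<zero> \<ominus> c)"
    using A unfolding M2s_one by (simp add: M2s_minus det_s_def)
  also have "\<dots> = \<one> \<ominus> tr2 R A \<oplus> det_s R s A"
    using A(2-5) s_carrier unfolding A(1) tr2_def det_s_def prod.case by algebra
  finally show ?thesis .
qed

lemma det_s_shift:
  assumes "(a,b,c,d) \<in> carrier (M2s R s)" "t \<in> carrier R"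
  shows "det_s R s (a \<ominus> t, b, c, d \<ominus> t) = char_s R s (a,b,c,d) t"
proof -
  have "a \<in> carrier R" "b \<in> carrier R" "c \<in> carrier R" "d \<in> carrier R" using assms(1) by simp_all
  then show ?thesis using assms(2) s_carrier unfolding det_s_def char_s_def tr2_def prod.case by algebra
qed

lemma char_s_roots_trace:
  assumes A: "A \<in> carrier (M2s R s)" and \<alpha>: "\<alpha> \<in> carrier R" and \<beta>: "\<beta> \<in> carrier R"
    and roots: "char_s R s A \<alpha> = \<zero>" "char_s R s A \<beta> = \<zero>" and unit: "\<beta> \<ominus> \<alpha> \<in> Units R"
  shows "tr2 R A = \<alpha> \<oplus> \<beta>"
proof -
  obtain a b c d where A': "A = (a,b,c,d)" "a \<in> carrier R" "b \<in> carrier R" "c \<in> carrier R" "d \<in> carrier R"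
    using A by (rule M2s_carrierE)
  have tr_c: "tr2 R A \<in> carrier R" and det_c: "det_s R s A \<in> carrier R"
    using A' s_carrier by (simp_all add: tr2_def det_s_def)
  have "(\<beta> \<ominus> \<alpha>) \<otimes> (\<alpha> \<oplus> \<beta> \<ominus> tr2 R A) = char_s R s A \<beta> \<ominus> char_s R s A \<alpha>"
    using \<alpha> \<beta> tr_c det_c unfolding char_s_def by algebra
  also have "\<dots> = (\<beta> \<ominus> \<alpha>) \<otimes> \<zero>" using roots \<alpha> \<beta> by (simp add: minus_eq r_neg)
  finally have "(\<beta> \<ominus> \<alpha>) \<otimes> (\<alpha> \<oplus> \<beta> \<ominus> tr2 R A) = (\<beta> \<ominus> \<alpha>) \<otimes> \<zero>" .
  moreover have "\<alpha> \<oplus> \<beta> \<ominus> tr2 R A \<in> carrier R" using \<alpha> \<beta> tr_c by simp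
  ultimately have "\<alpha> \<oplus> \<beta> \<ominus> tr2 R A = \<zero>" using Units_l_cancel[OF unit _ zero_closed] by blast
  then show ?thesis using \<alpha> \<beta> tr_c by (simp add: r_right_minus_eq)
qed

lemma char_s_idem_combination:
  assumes E: "E \<in> carrier (M2s R s)"
    and tr: "tr2 R E = \<one>" and det: "det_s R s E = \<zero>"
    and \<alpha>: "\<alpha> \<in> carrier R" and \<beta>: "\<beta> \<in> carrier R" and t: "t \<in> carrier R"
  shows "char_s R s (M2s_smult R \<beta> E \<oplus>\<^bsub>M2s R s\<^esub> M2s_smult R \<alpha> (\<one>\<^bsub>M2s R s\<^esub> \<ominus>\<^bsub>M2s R s\<^esub> E)) t =
    (t \<ominus> \<alpha>) \<otimes> (t \<ominus> \<beta>)"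
proof -
  obtain e1 e2 e3 e4 where E': "E = (e1,e2,e3,e4)"
    "e1 \<in> carrier R" "e2 \<in> carrier R" "e3 \<in> carrier R" "e4 \<in> carrier R"
    using E by (rule M2s_carrierE)
  have tr': "e1 \<oplus> e4 = \<one>" and det': "e1 \<otimes> e4 \<ominus> s \<otimes> s \<otimes> e2 \<otimes> e3 = \<zero>"
    using tr det unfolding E'(1) tr2_def det_s_def by simp_all
  define \<gamma> where "\<gamma> = \<beta> \<ominus> \<alpha>"
  have \<gamma>: "\<gamma> \<in> carrier R" unfolding \<gamma>_def using \<alpha> \<beta> by simp
  note carr = E'(2-5) \<alpha> \<beta> \<gamma> s_carrier
  \<comment> \<open>the matrix is \<alpha> I + \<gamma> E\<close>
  have "M2s_smult R \<beta> E \<oplus>\<^bsub>M2s R s\<^esub> M2s_smult R \<alpha> (\<one>\<^bsub>M2s R s\<^esub> \<ominus>\<^bsub>M2s R s\<^esub> E) =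
      (\<beta> \<otimes> e1 \<oplus> \<alpha> \<otimes> (\<one> \<ominus> e1), \<beta> \<otimes> e2 \<oplus> \<alpha> \<otimes> (\<zero> \<ominus> e2),
       \<beta> \<otimes> e3 \<oplus> \<alpha> \<otimes> (\<zero> \<ominus> e3), \<beta> \<otimes> e4 \<oplus> \<alpha> \<otimes> (\<one> \<ominus> e4))"
    using carr unfolding E'(1) M2s_one by (simp add: M2s_minus M2s_add)
  also have "\<dots> = (\<alpha> \<oplus> \<gamma> \<otimes> e1, \<gamma> \<otimes> e2, \<gamma> \<otimes> e3, \<alpha> \<oplus> \<gamma> \<otimes> e4)"
    using carr unfolding \<gamma>_def by algebra
  finally have A: "M2s_smult R \<beta> E \<oplus>\<^bsub>M2s R s\<^esub> M2s_smult R \<alpha> (\<one>\<^bsub>M2s R s\<^esub> \<ominus>\<^bsub>M2s R s\<^esub> E) =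
      (\<alpha> \<oplus> \<gamma> \<otimes> e1, \<gamma> \<otimes> e2, \<gamma> \<otimes> e3, \<alpha> \<oplus> \<gamma> \<otimes> e4)" .
  have "tr2 R (\<alpha> \<oplus> \<gamma> \<otimes> e1, \<gamma> \<otimes> e2, \<gamma> \<otimes> e3, \<alpha> \<oplus> \<gamma> \<otimes> e4) = \<alpha> \<oplus> \<alpha> \<oplus> \<gamma> \<otimes> (e1 \<oplus> e4)"
    using carr unfolding tr2_def prod.case by algebra
  then have trA: "tr2 R (\<alpha> \<oplus> \<gamma> \<otimes> e1, \<gamma> \<otimes> e2, \<gamma> \<otimes> e3, \<alpha> \<oplus> \<gamma> \<otimes> e4) = \<alpha> \<oplus> \<alpha> \<oplus> \<gamma>"
    using carr by (simp add: tr')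
  have "det_s R s (\<alpha> \<oplus> \<gamma> \<otimes> e1, \<gamma> \<otimes> e2, \<gamma> \<otimes> e3, \<alpha> \<oplus> \<gamma> \<otimes> e4) =
      \<alpha> \<otimes> \<alpha> \<oplus> \<alpha> \<otimes> \<gamma> \<otimes> (e1 \<oplus> e4) \<oplus> \<gamma> \<otimes> \<gamma> \<otimes> (e1 \<otimes> e4 \<ominus> s \<otimes> s \<otimes> e2 \<otimes> e3)"
    using carr unfolding det_s_def prod.case by algebra
  then have detA: "det_s R s (\<alpha> \<oplus> \<gamma> \<otimes> e1, \<gamma> \<otimes> e2, \<gamma> \<otimes> e3, \<alpha> \<oplus> \<gamma> \<otimes> e4) = \<alpha> \<otimes> \<alpha> \<oplus> \<alpha> \<otimes> \<gamma>"
    using carr by (simp add: tr' det')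
  show ?thesis
    using carr t unfolding A char_s_def trA detA unfolding \<gamma>_def by algebra
qed

lemma M2s_left_inverse_if_det_Units:
  assumes A: "A \<in> carrier (M2s R s)" and u: "det_s R s A \<in> Units R"
  shows "\<exists>U\<in>carrier (M2s R s). U \<otimes>\<^bsub>M2s R s\<^esub> A = \<one>\<^bsub>M2s R s\<^esub>"
proof -
  obtain a b c d where A': "A = (a,b,c,d)" "a \<in> carrier R" "b \<in> carrier R" "c \<in> carrier R" "d \<in> carrier R"
    using A by (rule M2s_carrierE)
  define i where "i = inv (det_s R s A)"
  have i: "i \<in> carrier R" "i \<otimes> det_s R s A = \<one>" using u unfolding i_def by auto
  \<comment> \<open>the adjugate, scaled by the inverse determinant\<close>
  have "(i \<otimes> d, \<ominus> (i \<otimes> b), \<ominus> (i \<otimes> c), i \<otimes> a) \<otimes>\<^bsub>M2s R s\<^esub> A =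
      (i \<otimes> det_s R s A, \<zero>, \<zero>, i \<otimes> det_s R s A)"
    using A'(2-5) i(1) s_carrier unfolding A'(1) M2s_mult det_s_def prod.case by algebra
  then show ?thesis
    using A' i by (intro bexI[of _ "(i \<otimes> d, \<ominus> (i \<otimes> b), \<ominus> (i \<otimes> c), i \<otimes> a)"]) (simp_all add: M2s_one)
qed

lemma idem_M2s_mult_eq_smult:
  assumes E: "E \<in> carrier (M2s R s)" "E \<otimes>\<^bsub>M2s R s\<^esub> E = E" "det_s R s E = \<zero>"
    and A: "A \<in> carrier (M2s R s)" "A \<otimes>\<^bsub>M2s R s\<^esub> E = E \<otimes>\<^bsub>M2s R s\<^esub> A"
  shows "E \<otimes>\<^bsub>M2s R s\<^esub> A = M2s_smult R (tr2 R (E \<otimes>\<^bsub>M2s R s\<^esub> A)) E"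
  using M.idem_commute_mult_eq_sandwich[OF E(1) A(1) E(2) A(2)]
    M2s_sandwich_if_det_s_zero[OF E(1) A(1) E(3)]
  by simp

lemma idem_commute_if_char_s_roots:
  assumes A: "(a,b,c,d) \<in> carrier (M2s R s)" and \<alpha>: "\<alpha> \<in> carrier R" and \<beta>: "\<beta> \<in> carrier R"
    and roots: "char_s R s (a,b,c,d) \<alpha> = \<zero>" "char_s R s (a,b,c,d) \<beta> = \<zero>"
    and unit: "\<beta> \<ominus> \<alpha> \<in> Units R"
  defines "E \<equiv> M2s_smult R (inv (\<beta> \<ominus> \<alpha>)) (a \<ominus> \<alpha>, b, c, d \<ominus> \<alpha>)"
  shows "E \<otimes>\<^bsub>M2s R s\<^esub> E = E" and "(a,b,c,d) \<otimes>\<^bsub>M2s R s\<^esub> E = E \<otimes>\<^bsub>M2s R s\<^esub> (a,b,c,d)"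
proof -
  have carr: "a \<in> carrier R" "b \<in> carrier R" "c \<in> carrier R" "d \<in> carrier R"
    using A by simp_all
  define w where "w = inv (\<beta> \<ominus> \<alpha>)"
  have w: "w \<in> carrier R" "w \<otimes> (\<beta> \<ominus> \<alpha>) = \<one>" unfolding w_def using unit by simp_all
  have tr: "tr2 R (a,b,c,d) = \<alpha> \<oplus> \<beta>" using A \<alpha> \<beta> roots unit by (rule char_s_roots_trace)
  define A0 where "A0 = (a \<ominus> \<alpha>, b, c, d \<ominus> \<alpha>)"
  have A0: "A0 \<in> carrier (M2s R s)" unfolding A0_def using carr \<alpha> by simp
  have "det_s R s A0 = \<zero>" unfolding A0_def using A \<alpha> roots(1) by (simp add: det_s_shift)
  moreover have "tr2 R A0 = \<beta> \<ominus> \<alpha>"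
  proof -
    have "tr2 R A0 = tr2 R (a,b,c,d) \<ominus> \<alpha> \<ominus> \<alpha>"
      using carr \<alpha> unfolding A0_def tr2_def prod.case by algebra
    then show ?thesis using \<alpha> \<beta> unfolding tr by algebra
  qed
  \<comment> \<open>Cayley-Hamilton for A - \<alpha> I, whose determinant is the characteristic polynomial at \<alpha>\<close>
  ultimately have A0_square: "A0 \<otimes>\<^bsub>M2s R s\<^esub> A0 = M2s_smult R (\<beta> \<ominus> \<alpha>) A0"
    using M2s_square_if_det_s_zero A0 by simp
  have "E \<otimes>\<^bsub>M2s R s\<^esub> E = M2s_smult R (w \<otimes> w \<otimes> (\<beta> \<ominus> \<alpha>)) A0"
    unfolding E_def w_def[symmetric] A0_def[symmetric] using w(1) A0 \<alpha> \<beta>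
    by (simp add: M2s_smult_mult A0_square M2s_smult_smult)
  also have "w \<otimes> w \<otimes> (\<beta> \<ominus> \<alpha>) = w" using w \<alpha> \<beta> by (simp add: m_assoc)
  finally show "E \<otimes>\<^bsub>M2s R s\<^esub> E = E" unfolding E_def w_def A0_def .
  show "(a,b,c,d) \<otimes>\<^bsub>M2s R s\<^esub> E = E \<otimes>\<^bsub>M2s R s\<^esub> (a,b,c,d)"
    using carr \<alpha> w(1) s_carrier unfolding E_def w_def[symmetric] M2s_smult M2s_mult by algebra
qed

end

section \<open>Strongly J-clean matrices over a local ring\<close>

locale local_M2s = local_cring + M2s_cring
begin

lemma M2s_jacobson_if_entries_jacobson:
  assumes J: "a \<in> jacobson R" "b \<in> jacobson R" "c \<in> jacobson R" "d \<in> jacobson R"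
  shows "(a,b,c,d) \<in> jacobson (M2s R s)"
proof (rule M.jacobsonI)
  show Z: "(a,b,c,d) \<in> carrier (M2s R s)" using J jacobson_subset by auto
  fix Y assume Y: "Y \<in> carrier (M2s R s)"
  define W where "W = Y \<otimes>\<^bsub>M2s R s\<^esub> (a,b,c,d)"
  obtain w1 w2 w3 w4 where W': "W = (w1,w2,w3,w4)" by (cases W)
  obtain y1 y2 y3 y4 where Y': "Y = (y1,y2,y3,y4)" "y1 \<in> carrier R" "y2 \<in> carrier R"
    "y3 \<in> carrier R" "y4 \<in> carrier R" using Y by (rule M2s_carrierE)
  have wJ: "w1 \<in> jacobson R" "w2 \<in> jacobson R" "w3 \<in> jacobson R" "w4 \<in> jacobson R"
    using W' Y' J s_carrier unfolding W_def by (auto simp: M2s_mult intro!: jacobson_add jacobson_l_mult)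
  have W_c: "W \<in> carrier (M2s R s)" using Y Z unfolding W_def by simp
  have tr_det_J: "tr2 R W \<in> jacobson R" "det_s R s W \<in> jacobson R"
    using wJ jacobson_subset s_carrier unfolding W' tr2_def det_s_def prod.case
    by (auto intro!: jacobson_minus jacobson_add jacobson_l_mult)
  then have "tr2 R W \<in> carrier R" "det_s R s W \<in> carrier R" using jacobson_subset by auto
  then have "det_s R s (\<one>\<^bsub>M2s R s\<^esub> \<ominus>\<^bsub>M2s R s\<^esub> W) = \<one> \<ominus> (tr2 R W \<ominus> det_s R s W)"
    unfolding det_s_one_minus[OF W_c] by algebra
  moreover have "\<one> \<ominus> (tr2 R W \<ominus> det_s R s W) \<in> Units R"
    using tr_det_J by (intro one_minus_jacobson_Units jacobson_minus)
  ultimately show "\<exists>U\<in>carrier (M2s R s). U \<otimes>\<^bsub>M2s R s\<^esub>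
      (\<one>\<^bsub>M2s R s\<^esub> \<ominus>\<^bsub>M2s R s\<^esub> Y \<otimes>\<^bsub>M2s R s\<^esub> (a,b,c,d)) = \<one>\<^bsub>M2s R s\<^esub>"
    using M2s_left_inverse_if_det_Units W_c unfolding W_def by simp
qed

lemma nontrivial_idem_M2s_det_s:
  assumes E: "E \<in> carrier (M2s R s)" "E \<otimes>\<^bsub>M2s R s\<^esub> E = E" and E_ne: "E \<noteq> \<one>\<^bsub>M2s R s\<^esub>"
  shows "det_s R s E = \<zero>"
proof -
  have "det_s R s E \<otimes> det_s R s E = det_s R s E"
    using det_s_mult[OF E(1) E(1)] E(2) by simp
  then have "det_s R s E = \<zero> \<or> det_s R s E = \<one>"
    using det_s_carrier[OF E(1)] idem_eq_zero_or_one by blast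
  moreover have "det_s R s E \<noteq> \<one>"
  proof
    assume "det_s R s E = \<one>"
    then have "det_s R s E \<in> Units R" by simp
    then obtain U where U: "U \<in> carrier (M2s R s)" "U \<otimes>\<^bsub>M2s R s\<^esub> E = \<one>\<^bsub>M2s R s\<^esub>"
      using M2s_left_inverse_if_det_Units[OF E(1)] by blast
    have "E = U \<otimes>\<^bsub>M2s R s\<^esub> E \<otimes>\<^bsub>M2s R s\<^esub> E" using U(2) E(1) by simp
    also have "\<dots> = U \<otimes>\<^bsub>M2s R s\<^esub> (E \<otimes>\<^bsub>M2s R s\<^esub> E)" by (rule M.m_assoc[OF U(1) E(1) E(1)])
    also have "\<dots> = \<one>\<^bsub>M2s R s\<^esub>" unfolding E(2) by (rule U(2))
    finally show False using E_ne by simp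
  qed
  ultimately show ?thesis by blast
qed

lemma nontrivial_idem_M2s_tr2:
  assumes E: "E \<in> carrier (M2s R s)" "E \<otimes>\<^bsub>M2s R s\<^esub> E = E"
    and nontrivial: "E \<noteq> \<zero>\<^bsub>M2s R s\<^esub>" "E \<noteq> \<one>\<^bsub>M2s R s\<^esub>"
  shows "tr2 R E = \<one>"
proof -
  define \<tau> where "\<tau> = tr2 R E"
  have \<tau>: "\<tau> \<in> carrier R" unfolding \<tau>_def using E(1) by (rule tr2_carrier)
  obtain e1 e2 e3 e4 where E': "E = (e1,e2,e3,e4)"
    "e1 \<in> carrier R" "e2 \<in> carrier R" "e3 \<in> carrier R" "e4 \<in> carrier R"
    using E(1) by (rule M2s_carrierE)
  have "E = M2s_smult R \<tau> E"
    using M2s_square_if_det_s_zero[OF E(1) nontrivial_idem_M2s_det_s[OF E nontrivial(2)]]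
    unfolding E(2) \<tau>_def .
  then have "(e1,e2,e3,e4) = (\<tau> \<otimes> e1, \<tau> \<otimes> e2, \<tau> \<otimes> e3, \<tau> \<otimes> e4)"
    unfolding E'(1) M2s_smult .
  then have e: "\<tau> \<otimes> e1 = e1" "\<tau> \<otimes> e2 = e2" "\<tau> \<otimes> e3 = e3" "\<tau> \<otimes> e4 = e4" by simp_all
  have "\<tau> \<otimes> \<tau> = \<tau> \<otimes> e1 \<oplus> \<tau> \<otimes> e4"
    using \<tau> E'(2-5) unfolding \<tau>_def E'(1) tr2_def prod.case by (simp add: r_distr)
  also have "\<dots> = \<tau>" unfolding e unfolding \<tau>_def E'(1) tr2_def by simp
  finally have "\<tau> = \<zero> \<or> \<tau> = \<one>" using \<tau> idem_eq_zero_or_one by blast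
  moreover have "\<tau> \<noteq> \<zero>"
  proof
    assume "\<tau> = \<zero>"
    then have "E = \<zero>\<^bsub>M2s R s\<^esub>" using e E'(2-5) unfolding E'(1) M2s_zero by auto
    with nontrivial(1) show False ..
  qed
  ultimately show ?thesis unfolding \<tau>_def by blast
qed

lemma idem_eigenvalue_diff_in_jacobson:
  assumes P: "P \<in> carrier (M2s R s)" "P \<otimes>\<^bsub>M2s R s\<^esub> P = P" "P \<noteq> \<zero>\<^bsub>M2s R s\<^esub>"
    and A: "A \<in> carrier (M2s R s)" and E: "E \<in> carrier (M2s R s)"
    and AE: "A \<ominus>\<^bsub>M2s R s\<^esub> E \<in> jacobson (M2s R s)"
    and x: "x \<in> carrier R" "P \<otimes>\<^bsub>M2s R s\<^esub> A = M2s_smult R x P"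
    and c: "c \<in> carrier R" "P \<otimes>\<^bsub>M2s R s\<^esub> E = M2s_smult R c P"
  shows "x \<ominus> c \<in> jacobson R"
proof (rule ccontr)
  assume "x \<ominus> c \<notin> jacobson R"
  then have unit: "x \<ominus> c \<in> Units R" using Units_if_notin_jacobson x(1) c(1) by simp
  have "P \<otimes>\<^bsub>M2s R s\<^esub> (A \<ominus>\<^bsub>M2s R s\<^esub> E) =
      P \<otimes>\<^bsub>M2s R s\<^esub> A \<ominus>\<^bsub>M2s R s\<^esub> P \<otimes>\<^bsub>M2s R s\<^esub> E"
    using P(1) A E by algebra
  also have "\<dots> = M2s_smult R (x \<ominus> c) P"
    unfolding x(2) c(2) using x(1) c(1) P(1) by (rule M2s_smult_minus)
  finally have "M2s_smult R (x \<ominus> c) P \<in> jacobson (M2s R s)"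
    using M.jacobson_l_mult[OF P(1) AE] by simp
  then have "P \<in> jacobson (M2s R s)" using M2s_smult_jacobson_cancel[OF unit P(1)] by blast
  then show False using M.idem_in_jacobson_eq_zero P by blast
qed

lemma char_s_roots_if_nontrivial_idem:
  assumes A: "A \<in> carrier (M2s R s)"
    and E: "E \<in> carrier (M2s R s)" "E \<otimes>\<^bsub>M2s R s\<^esub> E = E" "A \<otimes>\<^bsub>M2s R s\<^esub> E = E \<otimes>\<^bsub>M2s R s\<^esub> A"
      "A \<ominus>\<^bsub>M2s R s\<^esub> E \<in> jacobson (M2s R s)"
    and nontrivial: "E \<noteq> \<zero>\<^bsub>M2s R s\<^esub>" "E \<noteq> \<one>\<^bsub>M2s R s\<^esub>"
  shows "(\<exists>t\<in>jacobson R. char_s R s A t = \<zero>) \<and> (\<exists>j\<in>jacobson R. char_s R s A (\<one> \<oplus> j) = \<zero>)"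
proof -
  let ?F = "\<one>\<^bsub>M2s R s\<^esub> \<ominus>\<^bsub>M2s R s\<^esub> E"
  have F: "?F \<in> carrier (M2s R s)" "?F \<otimes>\<^bsub>M2s R s\<^esub> ?F = ?F"
    "A \<otimes>\<^bsub>M2s R s\<^esub> ?F = ?F \<otimes>\<^bsub>M2s R s\<^esub> A" "?F \<otimes>\<^bsub>M2s R s\<^esub> E = \<zero>\<^bsub>M2s R s\<^esub>"
    using M.one_minus_idem[OF E(1) A E(2) E(3)] E(1) by auto
  have F_nonzero: "?F \<noteq> \<zero>\<^bsub>M2s R s\<^esub>"
    using nontrivial(2) E(1) M.r_right_minus_eq[of "\<one>\<^bsub>M2s R s\<^esub>" E] by auto
  have trE: "tr2 R E = \<one>" using nontrivial_idem_M2s_tr2 E(1,2) nontrivial by blast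
  have detE: "det_s R s E = \<zero>" using nontrivial_idem_M2s_det_s E(1,2) nontrivial(2) by blast
  have detF: "det_s R s ?F = \<zero>"
    unfolding det_s_one_minus[OF E(1)] trE detE by (simp add: r_neg minus_eq)
  define \<beta> where "\<beta> = tr2 R (E \<otimes>\<^bsub>M2s R s\<^esub> A)"
  define \<alpha> where "\<alpha> = tr2 R (?F \<otimes>\<^bsub>M2s R s\<^esub> A)"
  have \<alpha>\<beta>: "\<alpha> \<in> carrier R" "\<beta> \<in> carrier R"
    unfolding \<alpha>_def \<beta>_def using A E(1) F(1) by (simp_all add: tr2_carrier)
  have EA: "E \<otimes>\<^bsub>M2s R s\<^esub> A = M2s_smult R \<beta> E"
    unfolding \<beta>_def using E(1,2) detE A E(3) by (rule idem_M2s_mult_eq_smult)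
  have FA: "?F \<otimes>\<^bsub>M2s R s\<^esub> A = M2s_smult R \<alpha> ?F"
    unfolding \<alpha>_def using F(1,2) detF A F(3) by (rule idem_M2s_mult_eq_smult)
  have "A = E \<otimes>\<^bsub>M2s R s\<^esub> A \<oplus>\<^bsub>M2s R s\<^esub> ?F \<otimes>\<^bsub>M2s R s\<^esub> A"
    using A E(1) by algebra
  then have char: "char_s R s A t = (t \<ominus> \<alpha>) \<otimes> (t \<ominus> \<beta>)" if "t \<in> carrier R" for t
    using char_s_idem_combination[OF E(1) trE detE \<alpha>\<beta>(1,2) that] unfolding EA FA by simp
  have "\<beta> \<ominus> \<one> \<in> jacobson R"
    using E(1,2) nontrivial(1) A E(1,4) \<alpha>\<beta>(2) EA one_closed
  proof (rule idem_eigenvalue_diff_in_jacobson)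
    show "E \<otimes>\<^bsub>M2s R s\<^esub> E = M2s_smult R \<one> E" using E(1,2) by (simp add: M2s_smult_one)
  qed
  moreover have "\<alpha> \<ominus> \<zero> \<in> jacobson R"
    using F(1,2) F_nonzero A E(1,4) \<alpha>\<beta>(1) FA zero_closed
  proof (rule idem_eigenvalue_diff_in_jacobson)
    show "?F \<otimes>\<^bsub>M2s R s\<^esub> E = M2s_smult R \<zero> ?F"
      unfolding F(4) using F(1) by (simp add: M2s_smult_zero)
  qed
  moreover have "\<one> \<oplus> (\<beta> \<ominus> \<one>) = \<beta>" and "\<alpha> \<ominus> \<zero> = \<alpha>" using \<alpha>\<beta> by algebra+
  moreover have "char_s R s A \<alpha> = \<zero>" and "char_s R s A \<beta> = \<zero>"
    using char \<alpha>\<beta> by (simp_all add: minus_eq r_neg)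
  ultimately show ?thesis by metis
qed

lemma strongly_J_clean_if_char_s_roots:
  assumes A: "A \<in> carrier (M2s R s)"
    and \<alpha>: "\<alpha> \<in> jacobson R" "char_s R s A \<alpha> = \<zero>"
    and j: "j \<in> jacobson R" "char_s R s A (\<one> \<oplus> j) = \<zero>"
  shows "strongly_J_clean (M2s R s) A"
proof -
  obtain a b c d where A': "A = (a,b,c,d)" "a \<in> carrier R" "b \<in> carrier R" "c \<in> carrier R" "d \<in> carrier R"
    using A by (rule M2s_carrierE)
  have \<alpha>_c: "\<alpha> \<in> carrier R" and j_c: "j \<in> carrier R" using \<alpha>(1) j(1) jacobson_subset by auto
  note carr = A'(2-5) \<alpha>_c j_c
  have "\<one> \<oplus> j \<ominus> \<alpha> = \<one> \<ominus> (\<alpha> \<ominus> j)" using carr by algebra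
  then have unit: "\<one> \<oplus> j \<ominus> \<alpha> \<in> Units R"
    using one_minus_jacobson_Units jacobson_minus \<alpha>(1) j(1) by simp
  define w where "w = inv (\<one> \<oplus> j \<ominus> \<alpha>)"
  have w: "w \<in> carrier R" "w \<otimes> (\<one> \<oplus> j \<ominus> \<alpha>) = \<one>" unfolding w_def using unit by simp_all
  define E where "E = M2s_smult R w (a \<ominus> \<alpha>, b, c, d \<ominus> \<alpha>)"
  have E_c: "E \<in> carrier (M2s R s)" unfolding E_def using carr w(1) by simp
  \<comment> \<open>E is the projection (A - \<alpha> I) / (\<beta> - \<alpha>) onto the kernel of A - \<beta> I, with \<beta> = 1 + j\<close>
  have "\<one> \<oplus> j \<in> carrier R" using j_c by simp
  note idem_commute = idem_commute_if_char_s_roots[OF A[unfolded A'(1)] \<alpha>_c this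
      \<alpha>(2)[unfolded A'(1)] j(2)[unfolded A'(1)] unit]
  have idem: "E \<otimes>\<^bsub>M2s R s\<^esub> E = E" unfolding E_def w_def by (rule idem_commute(1))
  have comm: "A \<otimes>\<^bsub>M2s R s\<^esub> E = E \<otimes>\<^bsub>M2s R s\<^esub> A"
    unfolding E_def w_def A'(1) by (rule idem_commute(2))
  have "\<one> \<ominus> w = w \<otimes> (j \<ominus> \<alpha>)"
  proof -
    have "\<one> \<ominus> w = w \<otimes> (\<one> \<oplus> j \<ominus> \<alpha>) \<ominus> w" using w by simp
    also have "\<dots> = w \<otimes> (j \<ominus> \<alpha>)" using carr w(1) by algebra
    finally show ?thesis .
  qed
  then have wJ: "\<one> \<ominus> w \<in> jacobson R"
    using w(1) \<alpha>(1) j(1) by (simp add: jacobson_l_mult jacobson_minus)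
  have "A \<ominus>\<^bsub>M2s R s\<^esub> E = (a \<ominus> w \<otimes> (a \<ominus> \<alpha>), b \<ominus> w \<otimes> b, c \<ominus> w \<otimes> c, d \<ominus> w \<otimes> (d \<ominus> \<alpha>))"
    unfolding A'(1) E_def using carr w(1) by (simp add: M2s_minus)
  also have "\<dots> = ((\<one> \<ominus> w) \<otimes> a \<oplus> w \<otimes> \<alpha>, (\<one> \<ominus> w) \<otimes> b, (\<one> \<ominus> w) \<otimes> c, (\<one> \<ominus> w) \<otimes> d \<oplus> w \<otimes> \<alpha>)"
    using carr w(1) by algebra
  finally have "A \<ominus>\<^bsub>M2s R s\<^esub> E \<in> jacobson (M2s R s)"
    using wJ \<alpha>(1) carr w(1)
    by (simp add: M2s_jacobson_if_entries_jacobson jacobson_add jacobson_r_mult jacobson_l_mult)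
  then show ?thesis
    unfolding strongly_J_clean_def using A E_c idem comm by blast
qed

end

theorem theorem3p6:
  fixes R :: "('a, 'b) ring_scheme" and s :: 'a and A :: "'a \<times> 'a \<times> 'a \<times> 'a"
  assumes "local_ring R" and "s \<in> carrier R" and "A \<in> carrier (M2s R s)"
  shows "strongly_J_clean (M2s R s) A \<longleftrightarrow>
     (A \<in> jacobson (M2s R s)
      \<or> \<one>\<^bsub>M2s R s\<^esub> \<ominus>\<^bsub>M2s R s\<^esub> A \<in> jacobson (M2s R s)
      \<or> ((\<exists>t\<in>jacobson R. char_s R s A t = \<zero>\<^bsub>R\<^esub>) \<and>
         (\<exists>j\<in>jacobson R. char_s R s A (\<one>\<^bsub>R\<^esub> \<oplus>\<^bsub>R\<^esub> j) = \<zero>\<^bsub>R\<^esub>)))"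
proof -
  have "cring R" using assms(1) unfolding local_ring_def by blast
  then interpret local_M2s R s
    using assms(1,2)
    by (intro local_M2s.intro local_cring.intro M2s_cring.intro local_cring_axioms.intro
        M2s_cring_axioms.intro)
  show ?thesis
    using M.strongly_J_clean_cases[of A] char_s_roots_if_nontrivial_idem[OF assms(3)]
      M.strongly_J_clean_if_jacobson[OF assms(3)] strongly_J_clean_if_char_s_roots[OF assms(3)]
    by blast
qed

end
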